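(* Let $s\ge2$ and let $\mathcal{C}$ be an $[n,k,d]_q$ linear code with multiple $(r_i,\delta_i)_{i\in[s]}$ localities with respect to a partition $\mathcal{T}_1,\dots,\mathcal{T}_s$ of $[n]$, $n_i=|\mathcal{T}_i|$, $r_1\le\dots\le r_s$, $\delta_1\ge\dots\ge\delta_s\ge2$. Let $\Delta_0=0$ and $\Delta_j=\sum_{i=1}^{j}\lceil n_i/(r_i+\delta_i-1)\rceil(\delta_i-1)$ for $j=1,\dots,s-1$. Suppose $\sum_{i=1}^{s-1}r_i\lceil n_i/(r_i+\delta_i-1)\rceil\le k-1$ and, for each $j=1,\dots,s-1$, $$r_j\left\lceil\frac{\Delta_j-\Delta_{j-1}-1}{\delta_j-1}\right\rceil+(\Delta_j-\Delta_{j-1}-1)<n_j.$$ Then: (i) for $j=1,\dots,s-1$ and $\Delta_{j-1}\le x\le\Delta_j$, $$\Phi(x)\le\sum_{i=1}^{j-1}r_i\left\lceil\frac{n_i}{r_i+\delta_i-1}\right\rceil+r_j\left\lceil\frac{x-\Delta_{j-1}}{\delta_j-1}\right\rceil+x;$$ (ii) for $\Delta_{s-1}\le x\le\rho+1$, $$\Phi(x)\le\sum_{i=1}^{s-1}r_i\left\lceil\frac{n_i}{r_i+\delta_i-1}\right\rceil+r_s\left\lceil\frac{x-\Delta_{s-1}}{\delta_s-1}\right\rceil+x,$$ where $\rho=\max\{x:\Phi(x)-x<k\}$.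
   Context: $[n]=\{1,\dots,n\}$. For an $[n,k,d]_q$ linear code $\mathcal{C}$ with generator matrix columns $\vec g_1,\dots,\vec g_n$, a regenerating set of coordinate $i$ is a subset $R\subseteq[n]$ with $i\in R$ such that $\vec g_i$ is an $\mathbb{F}_q$-linear combination of $\{\vec g_j\}_{j\in R\setminus\{i\}}$; regenerating sets are taken to be minimal (no proper subset of $R\setminus\{i\}$ suffices). $\mathcal{R}_i$ is the collection of regenerating sets of coordinate $i$. A sequence $R_1,\dots,R_m$ with $R_t\in\mathcal{R}_{l_t}$, $l_t\in[n]$, has a nontrivial union if $l_j\notin\bigcup_{t<j}R_t$ for all $j$. $\Phi(0)=0$ and for $x\ge1$, $\Phi(x)=\min\{|\bigcup_{t=1}^xR_t|: R_t\in\mathcal{R}_{l_t},\ R_1,\dots,R_x \text{ have a nontrivial union}\}$. Multiple $(r_i,\delta_i)_{i\in[s]}$ localities: $\mathcal{T}_1,\dots,\mathcal{T}_s$ is a partition of $[n]$, $r_1\le\dots\le r_s$ and $\delta_1\ge\dots\ge\delta_s\ge2$ are integers, and for each $i\in[s]$ and each $\iota\in\mathcal{T}_i$ there is $S_\iota\subseteq\mathcal{T}_i$ with $\iota\in S_\iota$, $\delta_i\le|S_\iota|\le r_i+\delta_i-1$, such that for every $E\subseteq S_\iota$ with $|E|=\delta_i-1$ and every $j\in E$, $(S_\iota\setminus E)\cup\{j\}\in\mathcal{R}_j$. *)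

theory Defs
  imports "HOL-Analysis.Analysis" "HOL-Library.Extended_Nat"
begin

text \<open>A linear code of length n is given by the columns g 1, ..., g n of a generator
matrix, each column a vector in 'f ^ 'k (k = CARD('k) rows).\<close>

definition regenerating ::
  "(nat \<Rightarrow> 'f::field ^ 'k) \<Rightarrow> nat \<Rightarrow> nat \<Rightarrow> nat set \<Rightarrow> bool" where
  "regenerating g n i R \<longleftrightarrow>
     R \<subseteq> {1..n} \<and> i \<in> R \<and>
     g i \<in> vec.span (g ` (R - {i})) \<and>
     (\<forall>S. S \<subset> R - {i} \<longrightarrow> g i \<notin> vec.span (g ` S))"

definition Phi :: "(nat \<Rightarrow> 'f::field ^ 'k) \<Rightarrow> nat \<Rightarrow> nat \<Rightarrow> enat" where
  "Phi g n x = Inf {enat (card (\<Union>t\<in>{1..x}. R t)) | R l.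
      (\<forall>t\<in>{1..x}. l t \<in> {1..n} \<and> regenerating g n (l t) (R t)) \<and>
      (\<forall>j\<in>{1..x}. l j \<notin> (\<Union>t\<in>{1..<j}. R t))}"

definition rho :: "(nat \<Rightarrow> 'f::field ^ 'k) \<Rightarrow> nat \<Rightarrow> nat \<Rightarrow> nat" where
  "rho g n k = Max {x. Phi g n x - enat x < enat k}"

definition multiple_localities ::
  "(nat \<Rightarrow> 'f::field ^ 'k) \<Rightarrow> nat \<Rightarrow> nat \<Rightarrow> (nat \<Rightarrow> nat set)
     \<Rightarrow> (nat \<Rightarrow> nat) \<Rightarrow> (nat \<Rightarrow> nat) \<Rightarrow> bool" where
  "multiple_localities g n s T r \<delta> \<longleftrightarrow>
     (\<forall>i\<in>{1..s}. T i \<noteq> {}) \<and>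
     (\<forall>i\<in>{1..s}. \<forall>j\<in>{1..s}. i \<noteq> j \<longrightarrow> T i \<inter> T j = {}) \<and>
     (\<Union>i\<in>{1..s}. T i) = {1..n} \<and>
     (\<forall>i\<in>{1..s}. \<forall>j\<in>{1..s}. i \<le> j \<longrightarrow> r i \<le> r j \<and> \<delta> j \<le> \<delta> i) \<and>
     (\<forall>i\<in>{1..s}. \<delta> i \<ge> 2) \<and>
     (\<forall>i\<in>{1..s}. \<forall>\<iota>\<in>T i. \<exists>S. S \<subseteq> T i \<and> \<iota> \<in> S \<and>
        \<delta> i \<le> card S \<and> card S \<le> r i + \<delta> i - 1 \<and>
        (\<forall>E. E \<subseteq> S \<and> card E = \<delta> i - 1 \<longrightarrow>
           (\<forall>j\<in>E. regenerating g n j ((S - E) \<union> {j}))))"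

definition ncl :: "(nat \<Rightarrow> nat set) \<Rightarrow> (nat \<Rightarrow> nat) \<Rightarrow> (nat \<Rightarrow> nat) \<Rightarrow> nat \<Rightarrow> int" where
  "ncl T r \<delta> i = \<lceil>real (card (T i)) / real (r i + \<delta> i - 1)\<rceil>"

definition Delta :: "(nat \<Rightarrow> nat set) \<Rightarrow> (nat \<Rightarrow> nat) \<Rightarrow> (nat \<Rightarrow> nat) \<Rightarrow> nat \<Rightarrow> int" where
  "Delta T r \<delta> j = (\<Sum>i=1..j. ncl T r \<delta> i * (int (\<delta> i) - 1))"

end

theory Submission
  imports Defs
begin

text \<open>The bounds are witnessed by explicit sequences of regenerating sets with a nontrivial union,
built greedily from the local groups S of the localities. If a local group S of class i still
contains uncovered coordinates, choose E in S with |E| = delta_i - 1 overlapping the uncovered part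
as much as possible; every uncovered b in E is regenerated by (S - E) + {b}, so up to delta_i - 1
steps are bought at the price of at most r_i further coordinates. Working through class j for
Delta_j - Delta_(j-1) steps thus costs r_j per block of delta_j - 1 steps, which produces the ceiling
terms, and the hypothesis on n_j ensures that class j does not run out of uncovered coordinates.
In the last class, running out means that the union is all of [n]; but then Phi(x) <= n anyway,
because a nontrivial union of length rho + 1 exists: by a rank count, a nontrivial union of length
x spanning the code has at least x + k elements, so the union attaining Phi(rho) misses a coordinate
and can be extended by one step.\<close>

section \<open>Nontrivial unions of regenerating sets\<close>

definition nontrivial_regen_seq ::
  "(nat \<Rightarrow> 'f::field ^ 'k) \<Rightarrow> nat \<Rightarrow> nat \<Rightarrow> (nat \<Rightarrow> nat set) \<Rightarrow> (nat \<Rightarrow> nat) \<Rightarrow> bool" where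
  "nontrivial_regen_seq g n x R l \<longleftrightarrow>
     (\<forall>t\<in>{1..x}. l t \<in> {1..n} \<and> regenerating g n (l t) (R t)) \<and>
     (\<forall>j\<in>{1..x}. l j \<notin> (\<Union>t\<in>{1..<j}. R t))"

definition nontrivial_union :: "(nat \<Rightarrow> 'f::field ^ 'k) \<Rightarrow> nat \<Rightarrow> nat \<Rightarrow> nat set \<Rightarrow> bool" where
  "nontrivial_union g n x U \<longleftrightarrow> (\<exists>R l. nontrivial_regen_seq g n x R l \<and> U = (\<Union>t\<in>{1..x}. R t))"

lemma Phi_eq_Inf_nontrivial_union:
  "Phi g n x = Inf {enat (card U) | U. nontrivial_union g n x U}"
  unfolding Phi_def nontrivial_union_def nontrivial_regen_seq_def by (rule arg_cong[where f = Inf]) blast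

lemma Phi_le_card: "nontrivial_union g n x U \<Longrightarrow> Phi g n x \<le> enat (card U)"
  unfolding Phi_eq_Inf_nontrivial_union by (rule Inf_lower) blast

lemma Inf_enat_mem: "A \<noteq> {} \<Longrightarrow> Inf (A :: enat set) \<in> A"
  unfolding Inf_enat_def by (auto intro: LeastI)

lemma Phi_attained:
  assumes "Phi g n x \<noteq> \<infinity>"
  obtains U where "nontrivial_union g n x U" "Phi g n x = enat (card U)"
proof -
  let ?A = "{enat (card U) | U. nontrivial_union g n x U}"
  have "?A \<noteq> {}"
  proof
    assume "?A = {}"
    then have "Phi g n x = \<infinity>" unfolding Phi_eq_Inf_nontrivial_union by (simp add: top_enat_def)
    then show False using assms by simp
  qed
  then have "Inf ?A \<in> ?A" by (rule Inf_enat_mem)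
  then obtain U where "nontrivial_union g n x U" "Inf ?A = enat (card U)" by blast
  then show ?thesis using that unfolding Phi_eq_Inf_nontrivial_union by blast
qed

lemma nontrivial_union_0: "nontrivial_union g n 0 {}"
  unfolding nontrivial_union_def nontrivial_regen_seq_def by (intro exI) simp

lemma regenerating_subset: "regenerating g n i R \<Longrightarrow> R \<subseteq> {1..n}"
  unfolding regenerating_def by blast

lemma nontrivial_union_subset: "nontrivial_union g n x U \<Longrightarrow> U \<subseteq> {1..n}"
  unfolding nontrivial_union_def nontrivial_regen_seq_def using regenerating_subset by blast

lemma nontrivial_union_finite: "nontrivial_union g n x U \<Longrightarrow> finite U"
  by (rule finite_subset[OF nontrivial_union_subset]) simp_all

lemma nontrivial_union_Suc:
  assumes "nontrivial_union g n x U" "i \<in> {1..n}" "regenerating g n i R" "i \<notin> U"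
  shows "nontrivial_union g n (Suc x) (U \<union> R)"
proof -
  obtain Rs l where seq: "nontrivial_regen_seq g n x Rs l" and U: "U = (\<Union>t\<in>{1..x}. Rs t)"
    using assms(1) unfolding nontrivial_union_def by blast
  have "nontrivial_regen_seq g n (Suc x) (Rs(Suc x := R)) (l(Suc x := i))"
    using seq assms(2-4) unfolding nontrivial_regen_seq_def U by (auto simp: le_Suc_eq)
  moreover have "U \<union> R = (\<Union>t\<in>{1..Suc x}. (Rs(Suc x := R)) t)"
    unfolding U by (auto simp: le_Suc_eq)
  ultimately show ?thesis unfolding nontrivial_union_def by blast
qed

lemma nontrivial_union_prefix:
  assumes "nontrivial_union g n x U" "y \<le> x"
  obtains V where "nontrivial_union g n y V"
proof -
  obtain R l where "nontrivial_regen_seq g n x R l"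
    using assms(1) unfolding nontrivial_union_def by blast
  then have "nontrivial_regen_seq g n y R l"
    using assms(2) unfolding nontrivial_regen_seq_def by auto
  then show ?thesis using that unfolding nontrivial_union_def by blast
qed

lemma nontrivial_regen_seq_mem: "nontrivial_regen_seq g n x R l \<Longrightarrow> t \<in> {1..x} \<Longrightarrow> l t \<in> R t"
  unfolding nontrivial_regen_seq_def regenerating_def by blast

lemma nontrivial_regen_seq_fresh:
  "nontrivial_regen_seq g n x R l \<Longrightarrow> j \<in> {1..x} \<Longrightarrow> t \<in> {1..<j} \<Longrightarrow> l j \<notin> R t"
  unfolding nontrivial_regen_seq_def by blast

lemma nontrivial_regen_seq_inj_on:
  assumes seq: "nontrivial_regen_seq g n x R l"
  shows "inj_on l {1..x}"
proof (rule inj_onI, rule ccontr)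
  have "l a \<noteq> l b" if "a \<in> {1..x}" "b \<in> {1..x}" "a < b" for a b
    using nontrivial_regen_seq_fresh[OF seq, of b a] nontrivial_regen_seq_mem[OF seq, of a] that
    by auto
  moreover fix a b assume "a \<in> {1..x}" "b \<in> {1..x}" "l a = l b" "a \<noteq> b"
  ultimately show False by (metis linorder_neqE_nat)
qed

lemma nontrivial_regen_seq_card_image: "nontrivial_regen_seq g n x R l \<Longrightarrow> card (l ` {1..x}) = x"
  using nontrivial_regen_seq_inj_on by (metis card_atLeastAtMost card_image diff_Suc_1)

lemma nontrivial_union_le_n: "nontrivial_union g n x U \<Longrightarrow> x \<le> n"
proof -
  assume "nontrivial_union g n x U"
  then obtain R l where seq: "nontrivial_regen_seq g n x R l"
    unfolding nontrivial_union_def by blast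
  then have "l ` {1..x} \<subseteq> {1..n}" unfolding nontrivial_regen_seq_def by blast
  then have "card (l ` {1..x}) \<le> card {1..n}" by (intro card_mono) simp_all
  then show "x \<le> n" using nontrivial_regen_seq_card_image[OF seq] by simp
qed

text \<open>Induction on t: earlier l's are covered by the induction hypothesis, and by nontriviality
later ones do not occur in R t.\<close>

lemma nontrivial_regen_seq_span:
  assumes seq: "nontrivial_regen_seq g n x R l" and "t \<in> {1..x}"
  shows "g (l t) \<in> vec.span (g ` ((\<Union>t\<in>{1..x}. R t) - l ` {1..x}))"
  using assms(2)
proof (induction t rule: less_induct)
  case (less t)
  let ?B = "vec.span (g ` ((\<Union>t\<in>{1..x}. R t) - l ` {1..x}))"
  have "g w \<in> ?B" if w: "w \<in> R t" "w \<noteq> l t" for w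
  proof (cases "w \<in> l ` {1..x}")
    case True
    then obtain t' where t': "t' \<in> {1..x}" "w = l t'" by blast
    have "\<not> t < t'" using seq t' w less.prems unfolding nontrivial_regen_seq_def by auto
    moreover have "t' \<noteq> t" using t' w by blast
    ultimately show ?thesis using less.IH t' by simp
  next
    case False
    then show ?thesis using w less.prems by (intro vec.span_base imageI) auto
  qed
  then have "g ` (R t - {l t}) \<subseteq> ?B" by blast
  then have "vec.span (g ` (R t - {l t})) \<subseteq> ?B"
    by (rule vec.span_minimal) (rule vec.subspace_span)
  moreover have "g (l t) \<in> vec.span (g ` (R t - {l t}))"
    using seq less.prems unfolding nontrivial_regen_seq_def regenerating_def by blast
  ultimately show ?case by blast
qed

lemma nontrivial_union_rank_bound:
  fixes g :: "nat \<Rightarrow> 'f::field ^ 'k"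
  assumes U: "nontrivial_union g n x U" and span: "vec.span (g ` U) = UNIV"
  shows "x + CARD('k) \<le> card U"
proof -
  obtain R l where seq: "nontrivial_regen_seq g n x R l" and U_eq: "U = (\<Union>t\<in>{1..x}. R t)"
    using U unfolding nontrivial_union_def by blast
  let ?L = "l ` {1..x}"
  have fin: "finite U" using nontrivial_union_finite[OF U] .
  have L: "?L \<subseteq> U" "card ?L = x"
    using nontrivial_regen_seq_mem[OF seq] nontrivial_regen_seq_card_image[OF seq] U_eq by auto
  have "g w \<in> vec.span (g ` (U - ?L))" if "w \<in> U" for w
  proof (cases "w \<in> ?L")
    case True
    then obtain t where "t \<in> {1..x}" "w = l t" by blast
    then show ?thesis using nontrivial_regen_seq_span[OF seq] U_eq by simp
  next
    case False
    then show ?thesis using that by (intro vec.span_base imageI) simp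
  qed
  then have "g ` U \<subseteq> vec.span (g ` (U - ?L))" by blast
  then have "vec.span (g ` U) \<subseteq> vec.span (g ` (U - ?L))"
    by (rule vec.span_minimal) (rule vec.subspace_span)
  then have "UNIV \<subseteq> vec.span (g ` (U - ?L))" using span by simp
  then have "vec.dim (UNIV :: ('f ^ 'k) set) \<le> card (g ` (U - ?L))"
    using fin by (intro vec.span_card_ge_dim) auto
  also have "\<dots> \<le> card (U - ?L)" using fin by (intro card_image_le) auto
  also have "\<dots> = card U - x" using L fin by (simp add: card_Diff_subset finite_subset)
  finally show ?thesis using card_mono[OF fin L(1)] L(2) by (simp add: card_cart_basis)
qed

lemma nontrivial_union_add_regenerated:
  assumes "finite B" "B \<noteq> {}" "nontrivial_union g n x U"
    and "\<And>b. b \<in> B \<Longrightarrow> b \<in> {1..n} \<and> regenerating g n b (C \<union> {b})"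
    and "B \<inter> U = {}" "B \<inter> C = {}"
  shows "nontrivial_union g n (x + card B) (U \<union> C \<union> B)"
  using assms(1,2,4-6)
proof (induction B rule: finite_ne_induct)
  case (singleton b)
  have "nontrivial_union g n (Suc x) (U \<union> (C \<union> {b}))"
    by (rule nontrivial_union_Suc[OF assms(3)]) (use singleton in auto)
  then show ?case by (simp add: Un_assoc)
next
  case (insert b B)
  have IH: "nontrivial_union g n (x + card B) (U \<union> C \<union> B)" using insert by blast
  have b: "b \<in> {1..n}" "regenerating g n b (C \<union> {b})" using insert.prems(1) by auto
  have "nontrivial_union g n (Suc (x + card B)) (U \<union> C \<union> B \<union> (C \<union> {b}))"
    by (rule nontrivial_union_Suc[OF IH b]) (use insert.prems insert.hyps in blast)
  moreover have "U \<union> C \<union> B \<union> (C \<union> {b}) = U \<union> C \<union> insert b B" by auto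
  ultimately show ?case using insert by simp
qed

lemma obtain_subset_with_card_max_inter:
  assumes "finite S" "A \<subseteq> S" "D \<le> card S"
  obtains E where "E \<subseteq> S" "card E = D" "card (E \<inter> A) = min D (card A)"
proof (cases "D \<le> card A")
  case True
  then obtain E where E: "E \<subseteq> A" "card E = D" using obtain_subset_with_card_n by metis
  show ?thesis
  proof (rule that)
    show "E \<subseteq> S" using E(1) assms(2) by (rule order_trans)
    show "card (E \<inter> A) = min D (card A)" using E True by (simp add: Int_absorb2)
  qed (rule E(2))
next
  case False
  have "D - card A \<le> card (S - A)"
    using assms by (simp add: card_Diff_subset finite_subset)
  then obtain F where F: "F \<subseteq> S - A" "card F = D - card A"
    using obtain_subset_with_card_n by metis
  have "card (A \<union> F) = D"
    using F False assms(1,2) by (subst card_Un_disjoint) (auto intro: finite_subset)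
  moreover have "(A \<union> F) \<inter> A = A" by blast
  ultimately show ?thesis using that[of "A \<union> F"] F(1) assms(2) False by auto
qed

section \<open>Greedy extension inside the local groups\<close>

lemma multiple_localities_cover:
  "multiple_localities g n s T r \<delta> \<Longrightarrow> (\<Union>i\<in>{1..s}. T i) = {1..n}"
  unfolding multiple_localities_def by (elim conjE) assumption

lemma multiple_localities_class_subset:
  "multiple_localities g n s T r \<delta> \<Longrightarrow> i \<in> {1..s} \<Longrightarrow> T i \<subseteq> {1..n}"
  using multiple_localities_cover by blast

lemma multiple_localities_delta_ge:
  assumes "multiple_localities g n s T r \<delta>" "i \<in> {1..s}" shows "2 \<le> \<delta> i"
proof -
  have "\<forall>i\<in>{1..s}. \<delta> i \<ge> 2" using assms(1) unfolding multiple_localities_def by (elim conjE) assumption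
  then show ?thesis using assms(2) by blast
qed

lemma multiple_localities_disjoint:
  assumes "multiple_localities g n s T r \<delta>" "i \<in> {1..s}" "j \<in> {1..s}" "i \<noteq> j"
  shows "T i \<inter> T j = {}"
proof -
  have "\<forall>i\<in>{1..s}. \<forall>j\<in>{1..s}. i \<noteq> j \<longrightarrow> T i \<inter> T j = {}"
    using assms(1) unfolding multiple_localities_def by (elim conjE) assumption
  then show ?thesis using assms(2-4) by blast
qed

lemma multiple_localities_mono:
  assumes "multiple_localities g n s T r \<delta>" "i \<in> {1..s}" "j \<in> {1..s}" "i \<le> j"
  shows "r i \<le> r j \<and> \<delta> j \<le> \<delta> i"
proof -
  have "\<forall>i\<in>{1..s}. \<forall>j\<in>{1..s}. i \<le> j \<longrightarrow> r i \<le> r j \<and> \<delta> j \<le> \<delta> i"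
    using assms(1) unfolding multiple_localities_def by (elim conjE) assumption
  then show ?thesis using assms(2-4) by blast
qed

lemma multiple_localities_local_group:
  assumes "multiple_localities g n s T r \<delta>" "i \<in> {1..s}" "\<iota> \<in> T i"
  obtains S where "S \<subseteq> T i" "\<iota> \<in> S" "\<delta> i \<le> card S" "card S \<le> r i + \<delta> i - 1"
    "\<And>E j. E \<subseteq> S \<Longrightarrow> card E = \<delta> i - 1 \<Longrightarrow> j \<in> E \<Longrightarrow> regenerating g n j ((S - E) \<union> {j})"
proof -
  have groups: "\<forall>i\<in>{1..s}. \<forall>\<iota>\<in>T i. \<exists>S. S \<subseteq> T i \<and> \<iota> \<in> S \<and> \<delta> i \<le> card S \<and> card S \<le> r i + \<delta> i - 1 \<and>
      (\<forall>E. E \<subseteq> S \<and> card E = \<delta> i - 1 \<longrightarrow> (\<forall>j\<in>E. regenerating g n j ((S - E) \<union> {j})))"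
    using assms(1) unfolding multiple_localities_def by (elim conjE) assumption
  obtain S where "S \<subseteq> T i \<and> \<iota> \<in> S \<and> \<delta> i \<le> card S \<and> card S \<le> r i + \<delta> i - 1 \<and>
      (\<forall>E. E \<subseteq> S \<and> card E = \<delta> i - 1 \<longrightarrow> (\<forall>j\<in>E. regenerating g n j ((S - E) \<union> {j})))"
    using bspec[OF bspec[OF groups assms(2)] assms(3)] by (elim exE)
  then show ?thesis using that by blast
qed

lemma nontrivial_union_extend_in_local_group:
  assumes loc: "multiple_localities g n s T r \<delta>" and i: "i \<in> {1..s}"
    and U: "nontrivial_union g n x U" and \<iota>: "\<iota> \<in> T i" "\<iota> \<notin> U"
  obtains S where "S \<subseteq> T i" "\<iota> \<in> S" "card S \<le> r i + \<delta> i - 1"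
    "\<And>t. 1 \<le> t \<Longrightarrow> t \<le> \<delta> i - 1 \<Longrightarrow> t \<le> card (S - U) \<Longrightarrow>
       \<exists>U'. nontrivial_union g n (x + t) U' \<and> U \<subseteq> U' \<and> U' \<subseteq> U \<union> S \<and>
          card U' \<le> card U + t + (card (S - U) - (\<delta> i - 1))"
proof -
  obtain S where S: "S \<subseteq> T i" "\<iota> \<in> S" "\<delta> i \<le> card S" "card S \<le> r i + \<delta> i - 1"
    and regen: "\<And>E j. E \<subseteq> S \<Longrightarrow> card E = \<delta> i - 1 \<Longrightarrow> j \<in> E \<Longrightarrow> regenerating g n j ((S - E) \<union> {j})"
    by (rule multiple_localities_local_group[OF loc i \<iota>(1)]) (rule that)
  have Tn: "T i \<subseteq> {1..n}" using multiple_localities_class_subset[OF loc i] .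
  have finS: "finite S" by (rule finite_subset[OF order_trans[OF S(1) Tn]]) simp
  have "\<delta> i - 1 \<le> card S" using S(3) by simp
  then obtain E where E: "E \<subseteq> S" "card E = \<delta> i - 1" "card (E \<inter> (S - U)) = min (\<delta> i - 1) (card (S - U))"
    by (rule obtain_subset_with_card_max_inter[OF finS Diff_subset])
  show ?thesis
  proof (rule that[OF S(1,2,4)])
    fix t assume t: "1 \<le> t" "t \<le> \<delta> i - 1" "t \<le> card (S - U)"
    have "t \<le> card (E \<inter> (S - U))" using t(2,3) E(3) by simp
    then obtain B where B: "B \<subseteq> E \<inter> (S - U)" "card B = t" "finite B"
      by (rule obtain_subset_with_card_n)
    have regenB: "b \<in> {1..n} \<and> regenerating g n b ((S - E) \<union> {b})" if "b \<in> B" for b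
    proof
      show "b \<in> {1..n}" using that B(1) E(1) S(1) Tn by blast
      show "regenerating g n b ((S - E) \<union> {b})" using that B(1) by (intro regen[OF E(1) E(2)]) blast
    qed
    have "B \<noteq> {}" using B(2) t(1) by auto
    moreover have "B \<inter> U = {}" "B \<inter> (S - E) = {}" using B(1) by blast+
    ultimately have "nontrivial_union g n (x + t) (U \<union> (S - E) \<union> B)"
      using nontrivial_union_add_regenerated[OF B(3) _ U regenB] B(2) by simp
    moreover have "card (U \<union> (S - E) \<union> B) \<le> card U + t + (card (S - U) - (\<delta> i - 1))"
    proof -
      have eq: "U \<union> (S - E) = U \<union> ((S - U) - (E \<inter> (S - U)))" by blast
      have "card (U \<union> (S - E) \<union> B) \<le> card U + card ((S - U) - (E \<inter> (S - U))) + card B"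
        using card_Un_le[of "U \<union> (S - E)" B] card_Un_le[of U "(S - U) - (E \<inter> (S - U))"]
        unfolding eq by linarith
      moreover have "card ((S - U) - (E \<inter> (S - U))) = card (S - U) - (\<delta> i - 1)"
        using E(3) finS by (subst card_Diff_subset) (auto simp: min_def)
      ultimately show ?thesis using B(2) by simp
    qed
    moreover have "U \<union> (S - E) \<union> B \<subseteq> U \<union> S" using B(1) by blast
    ultimately show "\<exists>U'. nontrivial_union g n (x + t) U' \<and> U \<subseteq> U' \<and> U' \<subseteq> U \<union> S \<and>
        card U' \<le> card U + t + (card (S - U) - (\<delta> i - 1))"
      by blast
  qed
qed

text \<open>The overhead a - D of a local group is paid only for a full block of D \<ge> d steps or for
the last block, so the cost stays within rr per completed block of d steps.\<close>

lemma greedy_block_cost: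
  fixes c u u' y N a D d rr :: nat
  assumes d: "0 < d" "d \<le> D" and y: "y < N"
    and u: "u \<le> c + y + rr * (y div d)" and u': "u' \<le> u + t + (a - D)" and overhead: "a - D \<le> rr"
    and t: "t = min (min D a) (N - y)"
  shows "u' \<le> c + (y + t) + rr * ((y + t) div d) \<or>
    y + t = N \<and> u' \<le> c + N + rr * ((N + d - 1) div d)"
proof (cases "a \<le> D")
  case True
  then have "u' \<le> c + (y + t) + rr * (y div d)" using u u' by simp
  also have "\<dots> \<le> c + (y + t) + rr * ((y + t) div d)" by (simp add: div_le_mono)
  finally show ?thesis ..
next
  case False
  have more: "u' \<le> c + (y + t) + rr * (y div d + 1)" using u u' overhead by simp
  have step: "(y + d) div d = y div d + 1" using d by simp
  show ?thesis
  proof (cases "D \<le> N - y")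
    case True
    then have "(y + d) div d \<le> (y + t) div d" using False d(2) t by (intro div_le_mono) simp
    then have "y div d + 1 \<le> (y + t) div d" using step by simp
    then have "rr * (y div d + 1) \<le> rr * ((y + t) div d)" by (rule mult_le_mono2)
    then show ?thesis using more by linarith
  next
    case False
    then have "y + t = N" using \<open>\<not> a \<le> D\<close> y t by (simp add: min_def)
    moreover have "(y + d) div d \<le> (N + d - 1) div d" using y by (intro div_le_mono) simp
    then have "y div d + 1 \<le> (N + d - 1) div d" using step by simp
    then have "rr * (y div d + 1) \<le> rr * ((N + d - 1) div d)" by (rule mult_le_mono2)
    ultimately show ?thesis using more by simp
  qed
qed

lemma nontrivial_union_greedy_step:
  fixes g :: "nat \<Rightarrow> 'f::field ^ 'k"
  assumes loc: "multiple_localities g n s T r \<delta>" and i: "i \<in> {1..s}" "r i \<le> rr" "d < \<delta> i"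
    and d: "0 < d" and y: "y < N"
    and U: "nontrivial_union g n (x0 + y) U" "card U \<le> c + y + rr * (y div d)"
    and \<iota>: "\<iota> \<in> T i" "\<iota> \<notin> U"
  obtains y' U' where "y < y'" "y' \<le> N" "nontrivial_union g n (x0 + y') U'" "U \<subseteq> U'"
    "U' \<subseteq> U \<union> T i"
    "card U' \<le> c + y' + rr * (y' div d) \<or> y' = N \<and> card U' \<le> c + N + rr * ((N + d - 1) div d)"
proof -
  obtain S where S: "S \<subseteq> T i" "\<iota> \<in> S" "card S \<le> r i + \<delta> i - 1"
    and extend: "\<And>t. 1 \<le> t \<Longrightarrow> t \<le> \<delta> i - 1 \<Longrightarrow> t \<le> card (S - U) \<Longrightarrow>
       \<exists>U'. nontrivial_union g n (x0 + y + t) U' \<and> U \<subseteq> U' \<and> U' \<subseteq> U \<union> S \<and>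
          card U' \<le> card U + t + (card (S - U) - (\<delta> i - 1))"
    by (rule nontrivial_union_extend_in_local_group[OF loc i(1) U(1) \<iota>]) (rule that)
  define a where "a = card (S - U)"
  define D where "D = \<delta> i - 1"
  define t where "t = min (min D a) (N - y)"
  have finS: "finite S"
    by (rule finite_subset[OF order_trans[OF S(1) multiple_localities_class_subset[OF loc i(1)]]]) simp
  have "S - U \<noteq> {}" using S(2) \<iota>(2) by blast
  then have a: "1 \<le> a" using finS unfolding a_def by (simp add: Suc_le_eq card_gt_0_iff)
  have "a \<le> card S" unfolding a_def by (rule card_mono[OF finS Diff_subset])
  then have overhead: "a - D \<le> rr" using S(3) i(2) unfolding D_def by linarith
  have t: "1 \<le> t" "t \<le> D" "t \<le> a" "t \<le> N - y" using a y i(3) d unfolding t_def D_def by auto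
  have "\<exists>U'. nontrivial_union g n (x0 + y + t) U' \<and> U \<subseteq> U' \<and> U' \<subseteq> U \<union> S \<and>
      card U' \<le> card U + t + (a - D)"
    unfolding a_def D_def by (rule extend) (use t in \<open>simp_all add: a_def D_def\<close>)
  then obtain U' where U': "nontrivial_union g n (x0 + y + t) U'" "U \<subseteq> U'" "U' \<subseteq> U \<union> S"
    "card U' \<le> card U + t + (a - D)" by blast
  have "d \<le> D" using i(3) unfolding D_def by simp
  then have bound: "card U' \<le> c + (y + t) + rr * ((y + t) div d) \<or>
      y + t = N \<and> card U' \<le> c + N + rr * ((N + d - 1) div d)"
    using greedy_block_cost[OF d _ y U(2) U'(4) overhead t_def] by blast
  show ?thesis
  proof (rule that[of "y + t" U'])
    show "nontrivial_union g n (x0 + (y + t)) U'" using U'(1) by (simp add: add.assoc)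
    show "U' \<subseteq> U \<union> T i" using U'(3) S(1) by blast
  qed (use y t U'(2) bound in auto)
qed

lemma nontrivial_union_greedy:
  fixes g :: "nat \<Rightarrow> 'f::field ^ 'k"
  assumes loc: "multiple_localities g n s T r \<delta>" and I: "I \<subseteq> {1..s}"
    and par: "\<And>i. i \<in> I \<Longrightarrow> r i \<le> rr \<and> d < \<delta> i" and d: "0 < d"
    and U0: "nontrivial_union g n x0 U0"
    and room: "\<And>y. y < N \<Longrightarrow> card U0 + y + rr * (y div d) < card (U0 \<union> (\<Union>i\<in>I. T i))"
  obtains U where "nontrivial_union g n (x0 + N) U" "U \<subseteq> U0 \<union> (\<Union>i\<in>I. T i)"
    "card U \<le> card U0 + N + rr * ((N + d - 1) div d)"
proof -
  let ?W = "U0 \<union> (\<Union>i\<in>I. T i)"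
  let ?done = "\<lambda>U. nontrivial_union g n (x0 + N) U \<and> U \<subseteq> ?W \<and>
    card U \<le> card U0 + N + rr * ((N + d - 1) div d)"
  have "\<exists>U'. ?done U'"
    if "y \<le> N" "nontrivial_union g n (x0 + y) U" "U0 \<subseteq> U" "U \<subseteq> ?W"
      "card U \<le> card U0 + y + rr * (y div d)" for y U
    using that
  proof (induction "N - y" arbitrary: y U rule: less_induct)
    case less
    show ?case
    proof (cases "y = N")
      case True
      have "rr * (y div d) \<le> rr * ((N + d - 1) div d)" using True d by (intro mult_le_mono2 div_le_mono) simp
      then have "card U \<le> card U0 + N + rr * ((N + d - 1) div d)"
        using less.prems(5) True by linarith
      then show ?thesis using less.prems(2,4) True by blast
    next
      case False
      then have y: "y < N" using less.prems(1) by simp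
      have "\<not> ?W \<subseteq> U"
      proof
        assume "?W \<subseteq> U"
        then have "card ?W \<le> card U" by (rule card_mono[OF nontrivial_union_finite[OF less.prems(2)]])
        then show False using room[OF y] less.prems(5) by linarith
      qed
      then obtain i \<iota> where i: "i \<in> I" and \<iota>: "\<iota> \<in> T i" "\<iota> \<notin> U" using less.prems(3) by blast
      have "i \<in> {1..s}" "r i \<le> rr" "d < \<delta> i" using i I par by auto
      then obtain y' U' where step: "y < y'" "y' \<le> N" "nontrivial_union g n (x0 + y') U'"
          "U \<subseteq> U'" "U' \<subseteq> U \<union> T i"
          "card U' \<le> card U0 + y' + rr * (y' div d) \<or>
           y' = N \<and> card U' \<le> card U0 + N + rr * ((N + d - 1) div d)"
        using nontrivial_union_greedy_step[OF loc _ _ _ d y less.prems(2,5) \<iota>] by blast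
      have U': "U0 \<subseteq> U'" "U' \<subseteq> ?W" using step(4,5) less.prems(3,4) i by blast+
      from step(6) show ?thesis
      proof
        assume card: "card U' \<le> card U0 + y' + rr * (y' div d)"
        have "N - y' < N - y" using step(1,2) y by linarith
        then show ?thesis using less.hyps step(2,3) U' card by blast
      next
        assume "y' = N \<and> card U' \<le> card U0 + N + rr * ((N + d - 1) div d)"
        then show ?thesis using step(3) U'(2) by (intro exI[of _ U']) simp
      qed
    qed
  qed
  from this[of 0 U0] have "\<exists>U'. ?done U'" using U0 by simp
  then show ?thesis using that by blast
qed

lemma nontrivial_union_extend_in_class:
  fixes g :: "nat \<Rightarrow> 'f::field ^ 'k"
  assumes loc: "multiple_localities g n s T r \<delta>" and j: "j \<in> {1..s}"
    and U0: "nontrivial_union g n x0 U0" "U0 \<subseteq> (\<Union>i\<in>{1..<j}. T i)"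
    and room: "\<And>y. y < N \<Longrightarrow> y + r j * (y div (\<delta> j - 1)) < card (T j)"
  obtains U where "nontrivial_union g n (x0 + N) U" "U \<subseteq> (\<Union>i\<in>{1..j}. T i)"
    "card U \<le> card U0 + N + r j * ((N + (\<delta> j - 1) - 1) div (\<delta> j - 1))"
proof -
  have "U0 \<inter> T j = {}"
    using U0(2) multiple_localities_disjoint[OF loc _ j] j by fastforce
  moreover have "finite (T j)"
    by (rule finite_subset[OF multiple_localities_class_subset[OF loc j]]) simp
  ultimately have "card (U0 \<union> (\<Union>i\<in>{j}. T i)) = card U0 + card (T j)"
    using nontrivial_union_finite[OF U0(1)] by (simp add: card_Un_disjoint)
  then have room': "card U0 + y + r j * (y div (\<delta> j - 1)) < card (U0 \<union> (\<Union>i\<in>{j}. T i))"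
    if "y < N" for y
    using room[OF that] by linarith
  have "2 \<le> \<delta> j" by (rule multiple_localities_delta_ge[OF loc j])
  then have "{j} \<subseteq> {1..s}" "\<And>i. i \<in> {j} \<Longrightarrow> r i \<le> r j \<and> \<delta> j - 1 < \<delta> i" "0 < \<delta> j - 1"
    using j by auto
  then obtain U where U: "nontrivial_union g n (x0 + N) U" "U \<subseteq> U0 \<union> (\<Union>i\<in>{j}. T i)"
    "card U \<le> card U0 + N + r j * ((N + (\<delta> j - 1) - 1) div (\<delta> j - 1))"
    using nontrivial_union_greedy[OF loc _ _ _ U0(1) room'] by blast
  have "U \<subseteq> (\<Union>i\<in>{1..j}. T i)" using U(2) U0(2) j by force
  then show ?thesis using that U(1,3) by blast
qed

section \<open>The bounds on Phi\<close>

lemma ceiling_divide_of_nat: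
  assumes "0 < d"
  shows "\<lceil>real m / real d\<rceil> = int ((m + d - 1) div d)"
proof -
  define q where "q = (m + d - 1) div d"
  have "q * d + (m + d - 1) mod d = m + d - 1" unfolding q_def by (rule div_mult_mod_eq)
  moreover have "(m + d - 1) mod d < d" using assms by simp
  ultimately have "m \<le> q * d" "q * d < m + d" by linarith+
  then have "real m \<le> real q * real d" "real q * real d < real m + real d"
    by (metis of_nat_le_iff of_nat_mult, metis of_nat_add of_nat_less_iff of_nat_mult)
  then have "\<lceil>real m / real d\<rceil> = int q"
    using assms by (intro ceiling_unique) (simp_all add: divide_le_eq less_divide_eq algebra_simps)
  then show ?thesis unfolding q_def .
qed

lemma add_mult_div_less_of_ceiling_bound:
  assumes d: "0 < d"
    and bound: "int r * \<lceil>real_of_int (Y - 1) / real d\<rceil> + (Y - 1) < int m" and y: "int y < Y"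
  shows "y + r * (y div d) < m"
proof -
  have "real (y div d) \<le> real y / real d" by (rule of_nat_div_le_of_nat)
  also have "\<dots> \<le> real_of_int (Y - 1) / real d" using d y by (intro divide_right_mono) simp_all
  also have "\<dots> \<le> of_int \<lceil>real_of_int (Y - 1) / real d\<rceil>" by (rule le_of_int_ceiling)
  finally have "int (y div d) \<le> \<lceil>real_of_int (Y - 1) / real d\<rceil>" by linarith
  then have "int r * int (y div d) \<le> int r * \<lceil>real_of_int (Y - 1) / real d\<rceil>"
    by (rule mult_left_mono) simp
  then have "int (y + r * (y div d)) < int m" using bound y by simp
  then show ?thesis by (simp only: of_nat_less_iff)
qed

lemma int_card_le_of_extension:
  assumes card: "card U \<le> card U0 + N + rr * ((N + d - 1) div d)"
    and U0: "int (card U0) \<le> S + D" and d: "0 < d"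
  shows "int (card U) \<le> S + int rr * \<lceil>real N / real d\<rceil> + (D + int N)"
proof -
  have "int (card U) \<le> int (card U0 + N + rr * ((N + d - 1) div d))"
    using card by (simp only: of_nat_le_iff)
  then show ?thesis using U0 ceiling_divide_of_nat[OF d, of N] by simp
qed

lemma ncl_nonneg: "0 \<le> ncl T r \<delta> i"
proof -
  have "\<lceil>0 :: real\<rceil> \<le> \<lceil>real (card (T i)) / real (r i + \<delta> i - 1)\<rceil>" by (rule ceiling_mono) simp
  then show ?thesis unfolding ncl_def by simp
qed

lemma Delta_Suc: "Delta T r \<delta> (Suc j) = Delta T r \<delta> j + ncl T r \<delta> (Suc j) * (int (\<delta> (Suc j)) - 1)"
  unfolding Delta_def by simp

lemma Delta_nonneg:
  assumes "\<And>i. i \<in> {1..j} \<Longrightarrow> 1 \<le> \<delta> i"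
  shows "0 \<le> Delta T r \<delta> j"
  unfolding Delta_def
proof (intro sum_nonneg mult_nonneg_nonneg ncl_nonneg)
  fix i assume "i \<in> {1..j}"
  then show "0 \<le> int (\<delta> i) - 1" using assms[of i] by simp
qed

lemma class_room_of_size_bound:
  assumes loc: "multiple_localities g n s T r \<delta>"
    and size: "\<forall>j\<in>{1..s-1}.
          int (r j) * \<lceil>real_of_int (Delta T r \<delta> j - Delta T r \<delta> (j-1) - 1) / real_of_int (int (\<delta> j) - 1)\<rceil>
            + (Delta T r \<delta> j - Delta T r \<delta> (j-1) - 1) < int (card (T j))"
    and j: "j \<in> {1..s-1}" and y: "int y < Delta T r \<delta> j - Delta T r \<delta> (j-1)"
  shows "y + r j * (y div (\<delta> j - 1)) < card (T j)"
proof -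
  have "j \<in> {1..s}" using j by auto
  then have "2 \<le> \<delta> j" by (rule multiple_localities_delta_ge[OF loc])
  then have "real_of_int (int (\<delta> j) - 1) = real (\<delta> j - 1)" "0 < \<delta> j - 1" by simp_all
  then show ?thesis using add_mult_div_less_of_ceiling_bound[OF _ _ y] bspec[OF size j] by simp
qed

lemma nontrivial_union_first_classes:
  fixes g :: "nat \<Rightarrow> 'f::field ^ 'k"
  assumes loc: "multiple_localities g n s T r \<delta>"
    and size: "\<forall>j\<in>{1..s-1}.
          int (r j) * \<lceil>real_of_int (Delta T r \<delta> j - Delta T r \<delta> (j-1) - 1) / real_of_int (int (\<delta> j) - 1)\<rceil>
            + (Delta T r \<delta> j - Delta T r \<delta> (j-1) - 1) < int (card (T j))"
    and J: "J \<le> s - 1"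
  obtains U where "nontrivial_union g n (nat (Delta T r \<delta> J)) U" "U \<subseteq> (\<Union>i\<in>{1..J}. T i)"
    "int (card U) \<le> (\<Sum>i=1..J. int (r i) * ncl T r \<delta> i) + Delta T r \<delta> J"
proof -
  have "\<exists>U. nontrivial_union g n (nat (Delta T r \<delta> J)) U \<and> U \<subseteq> (\<Union>i\<in>{1..J}. T i) \<and>
    int (card U) \<le> (\<Sum>i=1..J. int (r i) * ncl T r \<delta> i) + Delta T r \<delta> J"
    using J
  proof (induction J)
    case 0
    show ?case using nontrivial_union_0 by (simp add: Delta_def)
  next
    case (Suc J)
    then obtain U0 where U0: "nontrivial_union g n (nat (Delta T r \<delta> J)) U0"
      "U0 \<subseteq> (\<Union>i\<in>{1..J}. T i)"
      "int (card U0) \<le> (\<Sum>i=1..J. int (r i) * ncl T r \<delta> i) + Delta T r \<delta> J"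
      by auto
    define j where "j = Suc J"
    define d where "d = \<delta> j - 1"
    define N where "N = nat (ncl T r \<delta> j) * d"
    have j: "j \<in> {1..s}" "j \<in> {1..s-1}" using Suc.prems unfolding j_def by auto
    have U0_below: "U0 \<subseteq> (\<Union>i\<in>{1..<j}. T i)"
      using U0(2) unfolding j_def by (simp add: atLeastLessThanSuc_atLeastAtMost)
    have d: "0 < d" using multiple_localities_delta_ge[OF loc j(1)] unfolding d_def by simp
    have "0 \<le> Delta T r \<delta> J"
      using multiple_localities_delta_ge[OF loc] Suc.prems by (intro Delta_nonneg) force
    moreover have "Delta T r \<delta> j = Delta T r \<delta> J + int N"
      using Delta_Suc ncl_nonneg d unfolding j_def d_def N_def by simp
    ultimately have Delta_j: "nat (Delta T r \<delta> J) + N = nat (Delta T r \<delta> j)"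
      "Delta T r \<delta> j = Delta T r \<delta> J + int N" "Delta T r \<delta> j - Delta T r \<delta> (j - 1) = int N"
      unfolding j_def by simp_all
    obtain U where U: "nontrivial_union g n (nat (Delta T r \<delta> J) + N) U" "U \<subseteq> (\<Union>i\<in>{1..j}. T i)"
      "card U \<le> card U0 + N + r j * ((N + d - 1) div d)"
      using nontrivial_union_extend_in_class[OF loc j(1) U0(1) U0_below]
        class_room_of_size_bound[OF loc size j(2)] Delta_j(3) unfolding d_def by auto
    have "\<lceil>real N / real d\<rceil> = ncl T r \<delta> j" using d ncl_nonneg unfolding N_def by simp
    then have "int (card U) \<le> (\<Sum>i=1..J. int (r i) * ncl T r \<delta> i) + int (r j) * ncl T r \<delta> j
        + Delta T r \<delta> j"
      using int_card_le_of_extension[OF U(3) U0(3) d] Delta_j(2) unfolding j_def by simp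
    then have "int (card U) \<le> (\<Sum>i=1..j. int (r i) * ncl T r \<delta> i) + Delta T r \<delta> j"
      unfolding j_def by simp
    then show ?case using U(1,2) Delta_j(1) unfolding j_def by auto
  qed
  then show ?thesis using that by blast
qed

lemma rho_mem:
  assumes "0 < k"
  shows "Phi g n (rho g n k) - enat (rho g n k) < enat k"
proof -
  let ?X = "{x. Phi g n x - enat x < enat k}"
  have "?X \<subseteq> {..n}"
  proof
    fix x assume "x \<in> ?X"
    then have "Phi g n x \<noteq> \<infinity>" by (cases "Phi g n x") simp_all
    then obtain U where "nontrivial_union g n x U" by (rule Phi_attained)
    then show "x \<in> {..n}" using nontrivial_union_le_n by simp
  qed
  then have fin: "finite ?X" by (rule finite_subset) simp
  have "Phi g n 0 = 0"
    using Phi_le_card[OF nontrivial_union_0, of g n] by (simp add: zero_enat_def[symmetric])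
  then have "0 \<in> ?X" using assms by (simp add: zero_enat_def)
  then have "Max ?X \<in> ?X" by (intro Max_in[OF fin]) blast
  then show ?thesis unfolding rho_def by simp
qed

lemma nontrivial_union_Suc_rho:
  fixes g :: "nat \<Rightarrow> 'f::field ^ 'k"
  assumes loc: "multiple_localities g n s T r \<delta>" and span: "vec.span (g ` {1..n}) = UNIV"
  obtains V where "nontrivial_union g n (Suc (rho g n CARD('k))) V"
proof -
  define m where "m = rho g n CARD('k)"
  have m: "Phi g n m - enat m < enat CARD('k)" unfolding m_def by (rule rho_mem) simp
  then have "Phi g n m \<noteq> \<infinity>" by (cases "Phi g n m") simp_all
  then obtain V0 where V0: "nontrivial_union g n m V0" "Phi g n m = enat (card V0)" by (rule Phi_attained)
  have "V0 \<noteq> {1..n}"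
  proof
    assume "V0 = {1..n}"
    then have "m + CARD('k) \<le> card V0" using nontrivial_union_rank_bound[OF V0(1)] span by simp
    then show False using m V0(2) by simp
  qed
  then obtain \<iota> where \<iota>: "\<iota> \<in> {1..n}" "\<iota> \<notin> V0" using nontrivial_union_subset[OF V0(1)] by blast
  then obtain i where i: "i \<in> {1..s}" "\<iota> \<in> T i" using multiple_localities_cover[OF loc] by blast
  obtain S where S: "S \<subseteq> T i" "\<iota> \<in> S"
    and extend: "\<And>t. 1 \<le> t \<Longrightarrow> t \<le> \<delta> i - 1 \<Longrightarrow> t \<le> card (S - V0) \<Longrightarrow>
       \<exists>U'. nontrivial_union g n (m + t) U' \<and> V0 \<subseteq> U' \<and> U' \<subseteq> V0 \<union> S \<and>
          card U' \<le> card V0 + t + (card (S - V0) - (\<delta> i - 1))"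
    by (rule nontrivial_union_extend_in_local_group[OF loc i(1) V0(1) i(2) \<iota>(2)]) (rule that)
  have "finite S"
    by (rule finite_subset[OF order_trans[OF S(1) multiple_localities_class_subset[OF loc i(1)]]]) simp
  then have "1 \<le> card (S - V0)" using S(2) \<iota>(2) by (simp add: Suc_le_eq card_gt_0_iff) blast
  moreover have "1 \<le> \<delta> i - 1" using multiple_localities_delta_ge[OF loc i(1)] by simp
  ultimately obtain U' where "nontrivial_union g n (m + 1) U'" using extend[of 1] by blast
  then show ?thesis using that unfolding m_def by simp
qed

lemma Phi_le_n_upto_Suc_rho:
  fixes g :: "nat \<Rightarrow> 'f::field ^ 'k"
  assumes loc: "multiple_localities g n s T r \<delta>" and span: "vec.span (g ` {1..n}) = UNIV"
    and x: "x \<le> Suc (rho g n CARD('k))"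
  shows "Phi g n x \<le> enat n"
proof -
  obtain V where "nontrivial_union g n (Suc (rho g n CARD('k))) V"
    by (rule nontrivial_union_Suc_rho[OF loc span])
  then obtain W where W: "nontrivial_union g n x W" using x by (rule nontrivial_union_prefix)
  have "card W \<le> n" using card_mono[OF _ nontrivial_union_subset[OF W]] by simp
  then show ?thesis using Phi_le_card[OF W] by (simp add: order_trans)
qed

lemma Phi_le_of_extension:
  assumes U: "nontrivial_union g n (nat D + N) U"
    and card: "card U \<le> card U0 + N + rr * ((N + d - 1) div d)"
    and U0: "int (card U0) \<le> S + D" and D: "0 \<le> D" and x: "int x = D + int N" and d: "0 < d"
  shows "Phi g n x \<le> enat (nat (S + int rr * \<lceil>real_of_int (int x - D) / real d\<rceil> + int x))"
proof -
  have "int (nat D + N) = int x" using D x by simp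
  then have xN: "nat D + N = x" by (simp only: of_nat_eq_iff)
  have "int (card U) \<le> S + int rr * \<lceil>real_of_int (int x - D) / real d\<rceil> + int x"
    using int_card_le_of_extension[OF card U0 d] x by simp
  then have "card U \<le> nat (S + int rr * \<lceil>real_of_int (int x - D) / real d\<rceil> + int x)"
    using nat_mono by fastforce
  then show ?thesis using Phi_le_card[OF U[unfolded xN]] by (simp add: order_trans)
qed

lemma Phi_le_within_class:
  fixes g :: "nat \<Rightarrow> 'f::field ^ 'k"
  assumes loc: "multiple_localities g n s T r \<delta>"
    and size: "\<forall>j\<in>{1..s-1}.
          int (r j) * \<lceil>real_of_int (Delta T r \<delta> j - Delta T r \<delta> (j-1) - 1) / real_of_int (int (\<delta> j) - 1)\<rceil>
            + (Delta T r \<delta> j - Delta T r \<delta> (j-1) - 1) < int (card (T j))"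
    and j: "j \<in> {1..s-1}"
    and x: "Delta T r \<delta> (j-1) \<le> int x" "int x \<le> Delta T r \<delta> j"
  shows "Phi g n x \<le> enat (nat ((\<Sum>i=1..j-1. int (r i) * ncl T r \<delta> i)
    + int (r j) * \<lceil>real_of_int (int x - Delta T r \<delta> (j-1)) / real_of_int (int (\<delta> j) - 1)\<rceil>
    + int x))"
proof -
  have js: "j \<in> {1..s}" "j - 1 \<le> s - 1" "{1..j-1} = {1..<j}" using j by auto
  obtain U0 where U0: "nontrivial_union g n (nat (Delta T r \<delta> (j-1))) U0" "U0 \<subseteq> (\<Union>i\<in>{1..j-1}. T i)"
    "int (card U0) \<le> (\<Sum>i=1..j-1. int (r i) * ncl T r \<delta> i) + Delta T r \<delta> (j-1)"
    by (rule nontrivial_union_first_classes[OF loc size js(2)])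
  define N where "N = x - nat (Delta T r \<delta> (j-1))"
  have D: "0 \<le> Delta T r \<delta> (j-1)"
    using multiple_localities_delta_ge[OF loc] js(1) by (intro Delta_nonneg) force
  then have N: "int x = Delta T r \<delta> (j-1) + int N" using x(1) unfolding N_def by simp
  have "2 \<le> \<delta> j" by (rule multiple_localities_delta_ge[OF loc js(1)])
  then have d: "0 < \<delta> j - 1" "real_of_int (int (\<delta> j) - 1) = real (\<delta> j - 1)" by simp_all
  have room: "y + r j * (y div (\<delta> j - 1)) < card (T j)" if "y < N" for y
  proof (rule class_room_of_size_bound[OF loc size j])
    show "int y < Delta T r \<delta> j - Delta T r \<delta> (j - 1)" using that N x(2) by linarith
  qed
  obtain U where "nontrivial_union g n (nat (Delta T r \<delta> (j-1)) + N) U"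
    "card U \<le> card U0 + N + r j * ((N + (\<delta> j - 1) - 1) div (\<delta> j - 1))"
    using nontrivial_union_extend_in_class[OF loc js(1) U0(1) U0(2)[unfolded js(3)] room] by blast
  from Phi_le_of_extension[OF this U0(3) D N d(1)] show ?thesis unfolding d(2) .
qed

lemma Phi_le_last_class:
  fixes g :: "nat \<Rightarrow> 'f::field ^ 'k"
  assumes loc: "multiple_localities g n s T r \<delta>" and span: "vec.span (g ` {1..n}) = UNIV"
    and size: "\<forall>j\<in>{1..s-1}.
          int (r j) * \<lceil>real_of_int (Delta T r \<delta> j - Delta T r \<delta> (j-1) - 1) / real_of_int (int (\<delta> j) - 1)\<rceil>
            + (Delta T r \<delta> j - Delta T r \<delta> (j-1) - 1) < int (card (T j))"
    and s: "1 \<le> s"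
    and x: "Delta T r \<delta> (s-1) \<le> int x" "x \<le> rho g n CARD('k) + 1"
  shows "Phi g n x \<le> enat (nat ((\<Sum>i=1..s-1. int (r i) * ncl T r \<delta> i)
    + int (r s) * \<lceil>real_of_int (int x - Delta T r \<delta> (s-1)) / real_of_int (int (\<delta> s) - 1)\<rceil>
    + int x))" (is "_ \<le> enat (nat ?t)")
proof (cases "n \<le> nat ?t")
  case True
  have "Phi g n x \<le> enat n" using Phi_le_n_upto_Suc_rho[OF loc span] x(2) by simp
  also have "\<dots> \<le> enat (nat ?t)" using True by simp
  finally show ?thesis .
next
  case False
  obtain U0 where U0: "nontrivial_union g n (nat (Delta T r \<delta> (s-1))) U0"
    "int (card U0) \<le> (\<Sum>i=1..s-1. int (r i) * ncl T r \<delta> i) + Delta T r \<delta> (s-1)"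
    using nontrivial_union_first_classes[OF loc size order_refl] by blast
  define N where "N = x - nat (Delta T r \<delta> (s-1))"
  define d where "d = \<delta> s - 1"
  have ss: "s \<in> {1..s}" using s by simp
  have D: "0 \<le> Delta T r \<delta> (s-1)"
    using multiple_localities_delta_ge[OF loc] by (intro Delta_nonneg) force
  then have N: "int x = Delta T r \<delta> (s-1) + int N" using x(1) unfolding N_def by simp
  have "2 \<le> \<delta> s" by (rule multiple_localities_delta_ge[OF loc ss])
  then have d: "0 < d" "real_of_int (int (\<delta> s) - 1) = real d" unfolding d_def by simp_all
  have par: "r i \<le> r s \<and> d < \<delta> i" if "i \<in> {1..s}" for i
    using multiple_localities_mono[OF loc that ss] that d(1) unfolding d_def by auto
  have ceil: "\<lceil>real_of_int (int x - Delta T r \<delta> (s-1)) / real d\<rceil> = int ((N + d - 1) div d)"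
    using ceiling_divide_of_nat[OF d(1), of N] N by simp
  have all: "U0 \<union> (\<Union>i\<in>{1..s}. T i) = {1..n}"
    using multiple_localities_cover[OF loc] nontrivial_union_subset[OF U0(1)] by blast
  have room: "card U0 + y + r s * (y div d) < card (U0 \<union> (\<Union>i\<in>{1..s}. T i))" if "y < N" for y
  proof -
    have "y div d \<le> (N + d - 1) div d" using that by (intro div_le_mono) simp
    then have "int (r s * (y div d)) \<le> int (r s * ((N + d - 1) div d))"
      by (simp only: of_nat_le_iff mult_le_mono2)
    then have "int (card U0 + y + r s * (y div d)) < ?t"
      using that U0(2) N ceil unfolding d(2) by simp
    then have "card U0 + y + r s * (y div d) < nat ?t" by (simp only: zless_nat_eq_int_zless)
    then show ?thesis using False all by simp
  qed
  obtain U where "nontrivial_union g n (nat (Delta T r \<delta> (s-1)) + N) U"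
    "card U \<le> card U0 + N + r s * ((N + d - 1) div d)"
    using nontrivial_union_greedy[OF loc subset_refl par d(1) U0(1) room] by blast
  from Phi_le_of_extension[OF this U0(2) D N d(1)] show ?thesis unfolding d(2) .
qed

theorem lemma2:
  fixes g :: "nat \<Rightarrow> 'f::{field,finite} ^ 'k"
    and n s :: nat and T :: "nat \<Rightarrow> nat set" and r \<delta> :: "nat \<Rightarrow> nat"
  assumes "s \<ge> 2"
    and "vec.span (g ` {1..n}) = UNIV"
    and "multiple_localities g n s T r \<delta>"
    and "(\<Sum>i=1..s-1. int (r i) * ncl T r \<delta> i) \<le> int CARD('k) - 1"
    and "\<forall>j\<in>{1..s-1}.
          int (r j) * \<lceil>real_of_int (Delta T r \<delta> j - Delta T r \<delta> (j-1) - 1) / real_of_int (int (\<delta> j) - 1)\<rceil>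
            + (Delta T r \<delta> j - Delta T r \<delta> (j-1) - 1) < int (card (T j))"
  shows "(\<forall>j\<in>{1..s-1}. \<forall>x::nat. Delta T r \<delta> (j-1) \<le> int x \<and> int x \<le> Delta T r \<delta> j \<longrightarrow>
            Phi g n x \<le> enat (nat ((\<Sum>i=1..j-1. int (r i) * ncl T r \<delta> i)
              + int (r j) * \<lceil>real_of_int (int x - Delta T r \<delta> (j-1)) / real_of_int (int (\<delta> j) - 1)\<rceil>
              + int x)))
       \<and> (\<forall>x::nat. Delta T r \<delta> (s-1) \<le> int x \<and> x \<le> rho g n CARD('k) + 1 \<longrightarrow>
            Phi g n x \<le> enat (nat ((\<Sum>i=1..s-1. int (r i) * ncl T r \<delta> i)
              + int (r s) * \<lceil>real_of_int (int x - Delta T r \<delta> (s-1)) / real_of_int (int (\<delta> s) - 1)\<rceil>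
              + int x)))"
proof (intro conjI ballI allI impI)
  fix j x
  assume "j \<in> {1..s-1}" and "Delta T r \<delta> (j-1) \<le> int x \<and> int x \<le> Delta T r \<delta> j"
  then show "Phi g n x \<le> enat (nat ((\<Sum>i=1..j-1. int (r i) * ncl T r \<delta> i)
      + int (r j) * \<lceil>real_of_int (int x - Delta T r \<delta> (j-1)) / real_of_int (int (\<delta> j) - 1)\<rceil>
      + int x))"
    using Phi_le_within_class[OF assms(3,5)] by blast
next
  fix x
  assume "Delta T r \<delta> (s-1) \<le> int x \<and> x \<le> rho g n CARD('k) + 1"
  moreover have "1 \<le> s" using assms(1) by simp
  ultimately show "Phi g n x \<le> enat (nat ((\<Sum>i=1..s-1. int (r i) * ncl T r \<delta> i)
      + int (r s) * \<lceil>real_of_int (int x - Delta T r \<delta> (s-1)) / real_of_int (int (\<delta> s) - 1)\<rceil>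
      + int x))"
    using Phi_le_last_class[OF assms(3,2,5)] by blast
qed

end
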